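(* Let $\mathcal{X}\subset\mathbb{R}^d$ be bounded, let $\mathcal{M}_f$ be a set of finite (nonzero) measures on $\mathcal{X}$, set $\mathcal{F}:=\{\Lambda^*\mid\Lambda\in\mathcal{M}_f\}$, and let $S':\mathcal{F}\times\mathcal{X}\to\mathbb{R}$ be a (strictly) consistent scoring function for $\mathrm{id}_{\mathcal{F}}$. Define $S:\mathcal{F}\times\mathbb{M}_0\to\mathbb{R}$ by $$S(\Lambda^*,\{y_1,\dots,y_n\}):=\sum_{i=1}^n S'(\Lambda^*,y_i)$$ for $n\in\mathbb{N}$ and $S(\Lambda^*,\emptyset)=0$. Then $S$ is consistent for the normalized intensity measure, i.e. for every finite point process $\Phi$ on $\mathcal{X}$ with intensity measure $\Lambda\in\mathcal{M}_f$ (for which the expected scores exist) and every $Q\in\mathcal{M}_f$, $\mathbb{E}S(Q^*,\Phi)\ge\mathbb{E}S(\Lambda^*,\Phi)$. It is strictly consistent (equality forces $Q^*=\Lambda^*$) if $S'$ is strictly consistent.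
   Context: $\mathbb{M}_0$ denotes the space of finite counting measures on $\mathcal{X}$; a realization is written as the set of its points $\{y_1,\dots,y_n\}$. For a finite measure $\Lambda$ on $\mathcal{X}$, $|\Lambda|:=\Lambda(\mathcal{X})$ and $\Lambda^*:=\Lambda/|\Lambda|$ is its normalized measure. The intensity measure of $\Phi$ is $\Lambda(B)=\mathbb{E}\Phi(B)$. A scoring function $S'$ on $\mathcal{F}\times\mathcal{X}$ is consistent for $\mathrm{id}_{\mathcal{F}}$ if $S'(G,\cdot)$ is $F$-integrable and $\int S'(G,x)\,dF(x)\ge\int S'(F,x)\,dF(x)$ for all $F,G\in\mathcal{F}$; strictly consistent if equality implies $G=F$. *)

theory Defs
  imports "HOL-Probability.Probability"
begin

definition finite_nonzero_measures_on :: "'a::euclidean_space set \<Rightarrow> 'a measure set" where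
  "finite_nonzero_measures_on X =
     {M. space M = X \<and> sets M = sets (restrict_space borel X) \<and>
         emeasure M X < \<infinity> \<and> emeasure M X \<noteq> 0}"

definition normalize_measure :: "'a measure \<Rightarrow> 'a measure" where
  "normalize_measure M = scale_measure (ennreal (1 / measure M (space M))) M"

definition consistent_id :: "'a measure set \<Rightarrow> ('a measure \<Rightarrow> 'a \<Rightarrow> real) \<Rightarrow> bool" where
  "consistent_id Fs S' \<longleftrightarrow>
     (\<forall>F\<in>Fs. \<forall>G\<in>Fs. integrable F (S' G) \<and>
        (\<integral>x. S' G x \<partial>F) \<ge> (\<integral>x. S' F x \<partial>F))"

definition strictly_consistent_id :: "'a measure set \<Rightarrow> ('a measure \<Rightarrow> 'a \<Rightarrow> real) \<Rightarrow> bool" where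
  "strictly_consistent_id Fs S' \<longleftrightarrow> consistent_id Fs S' \<and>
     (\<forall>F\<in>Fs. \<forall>G\<in>Fs. (\<integral>x. S' G x \<partial>F) = (\<integral>x. S' F x \<partial>F) \<longrightarrow> G = F)"

text \<open>Finite counting measures are represented as finite multisets of points;
  count_in phi B is phi(B).\<close>
definition count_in :: "'a multiset \<Rightarrow> 'a set \<Rightarrow> nat" where
  "count_in \<phi> B = size (filter_mset (\<lambda>y. y \<in> B) \<phi>)"

definition finite_point_process :: "'b measure \<Rightarrow> 'a::euclidean_space set \<Rightarrow> ('b \<Rightarrow> 'a multiset) \<Rightarrow> bool" where
  "finite_point_process P X \<Phi> \<longleftrightarrow> prob_space P \<and>
     (\<forall>\<omega>\<in>space P. set_mset (\<Phi> \<omega>) \<subseteq> X) \<and>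
     (\<forall>B\<in>sets (restrict_space borel X).
        (\<lambda>\<omega>. count_in (\<Phi> \<omega>) B) \<in> measurable P (count_space UNIV))"

definition is_intensity_measure :: "'b measure \<Rightarrow> ('b \<Rightarrow> 'a multiset) \<Rightarrow> 'a measure \<Rightarrow> bool" where
  "is_intensity_measure P \<Phi> \<Lambda> \<longleftrightarrow>
     (\<forall>B\<in>sets \<Lambda>. emeasure \<Lambda> B = (\<integral>\<^sup>+\<omega>. of_nat (count_in (\<Phi> \<omega>) B) \<partial>P))"

definition sum_score :: "('a measure \<Rightarrow> 'a \<Rightarrow> real) \<Rightarrow> 'a measure \<Rightarrow> 'a multiset \<Rightarrow> real" where
  "sum_score S' G \<phi> = sum_mset (image_mset (S' G) \<phi>)"

end

theory Submission
  imports Defs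
begin

text \<open>Campbell's formula \<open>E (\<Sum>y\<in>#\<Phi>. f y) = \<integral> f d\<Lambda>\<close> holds for indicators by the
  definition of the intensity measure, hence for all integrable \<open>f\<close> by linearity and monotone
  convergence. Applied to \<open>f = S' G\<close> it gives \<open>E S(G, \<Phi>) = |\<Lambda>| \<integral> S' G d\<Lambda>\<^sup>*\<close>, so, as
  \<open>|\<Lambda>| > 0\<close>, comparing expected scores of \<open>S\<close> under \<open>\<Phi>\<close> is comparing expected scores of \<open>S'\<close>
  under \<open>\<Lambda>\<^sup>*\<close>, and (strict) consistency of \<open>S'\<close> carries over.\<close>

lemma sum_mset_image_diff:
  fixes f g :: "'a \<Rightarrow> 'b::ab_group_add"
  shows "(\<Sum>x\<in>#A. f x - g x) = (\<Sum>x\<in>#A. f x) - (\<Sum>x\<in>#A. g x)"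
  by (induction A) (auto simp: algebra_simps)

lemma sum_mset_image_nonneg:
  fixes f :: "'a \<Rightarrow> 'b::ordered_comm_monoid_add"
  shows "(\<And>x. x \<in># A \<Longrightarrow> 0 \<le> f x) \<Longrightarrow> 0 \<le> (\<Sum>x\<in>#A. f x)"
  by (induction A) auto

lemma ennreal_sum_mset_image:
  "(\<And>x. x \<in># A \<Longrightarrow> 0 \<le> f x) \<Longrightarrow> ennreal (\<Sum>x\<in>#A. f x) = (\<Sum>x\<in>#A. ennreal (f x))"
  by (induction A) (auto simp: ennreal_plus sum_mset_image_nonneg)

lemma sum_mset_image_SUP:
  fixes U :: "nat \<Rightarrow> 'a \<Rightarrow> ennreal"
  assumes "incseq U"
  shows "(\<Sum>x\<in>#A. SUP i. U i x) = (SUP i. \<Sum>x\<in>#A. U i x)"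
proof (induction A)
  case (add x A)
  have "incseq (\<lambda>i. U i x)" and "incseq (\<lambda>i. \<Sum>y\<in>#A. U i y)"
    using assms by (auto simp: incseq_def le_fun_def intro!: sum_mset_mono)
  from ennreal_SUP_add[OF this] show ?case
    using add.IH by simp
qed simp

lemma sum_mset_indicator: "(\<Sum>x\<in>#\<phi>. indicator B x) = (of_nat (count_in \<phi> B) :: ennreal)"
  unfolding count_in_def by (induction \<phi>) (auto simp: indicator_def)

locale point_process_intensity =
  fixes P :: "'b measure" and X :: "'a::euclidean_space set"
    and \<Phi> :: "'b \<Rightarrow> 'a multiset" and L :: "'a measure"
  assumes point_process: "finite_point_process P X \<Phi>"
    and intensity: "is_intensity_measure P \<Phi> L"
    and sets_L: "sets L = sets (restrict_space borel X)"
begin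

lemma space_L: "space L = X"
  using sets_eq_imp_space_eq[OF sets_L] by (simp add: space_restrict_space)

lemma points_in_space: "\<omega> \<in> space P \<Longrightarrow> set_mset (\<Phi> \<omega>) \<subseteq> space L"
  using point_process space_L by (auto simp: finite_point_process_def)

lemma campbell_nn_integral:
  assumes "f \<in> borel_measurable L"
  shows "(\<lambda>\<omega>. \<Sum>x\<in>#\<Phi> \<omega>. f x) \<in> borel_measurable P
    \<and> (\<integral>\<^sup>+\<omega>. (\<Sum>x\<in>#\<Phi> \<omega>. f x) \<partial>P) = integral\<^sup>N L f"
  using assms
proof (induction rule: borel_measurable_induct)
  case (cong f g)
  have "(\<Sum>x\<in>#\<Phi> \<omega>. f x) = (\<Sum>x\<in>#\<Phi> \<omega>. g x)" if "\<omega> \<in> space P" for \<omega>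
    using cong.hyps(3) points_in_space[OF that] by (intro arg_cong[where f=sum_mset] image_mset_cong) auto
  with cong.IH show ?case
    using cong.hyps(3) by (auto cong: measurable_cong nn_integral_cong)
next
  case (set B)
  have "(\<lambda>\<omega>. count_in (\<Phi> \<omega>) B) \<in> measurable P (count_space UNIV)"
    using point_process set sets_L by (auto simp: finite_point_process_def)
  then have "(\<lambda>\<omega>. of_nat (count_in (\<Phi> \<omega>) B) :: ennreal) \<in> borel_measurable P"
    by (rule measurable_compose) simp
  with set intensity show ?case
    by (simp add: sum_mset_indicator is_intensity_measure_def)
next
  case (mult u c)
  then have [measurable]: "(\<lambda>\<omega>. \<Sum>x\<in>#\<Phi> \<omega>. u x) \<in> borel_measurable P"
    by blast
  show ?case
    using mult by (simp add: sum_mset_distrib_left[symmetric] nn_integral_cmult)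
next
  case (add u v)
  then have [measurable]: "(\<lambda>\<omega>. \<Sum>x\<in>#\<Phi> \<omega>. u x) \<in> borel_measurable P"
    "(\<lambda>\<omega>. \<Sum>x\<in>#\<Phi> \<omega>. v x) \<in> borel_measurable P"
    by blast+
  show ?case
    using add by (simp add: sum_mset.distrib nn_integral_add)
next
  case (seq U)
  have "incseq (\<lambda>i \<omega>. \<Sum>x\<in>#\<Phi> \<omega>. U i x)"
    using seq.hyps(3) by (auto simp: incseq_def le_fun_def intro!: sum_mset_mono)
  moreover have meas: "(\<lambda>\<omega>. \<Sum>x\<in>#\<Phi> \<omega>. U i x) \<in> borel_measurable P" for i
    using seq.IH by blast
  moreover have "(\<lambda>\<omega>. SUP i. \<Sum>x\<in>#\<Phi> \<omega>. U i x) \<in> borel_measurable P"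
    using meas by measurable
  ultimately show ?case
    using seq.IH seq.hyps
    by (simp add: SUP_apply image_image sum_mset_image_SUP nn_integral_monotone_convergence_SUP)
qed

lemma campbell_integral_nonneg:
  fixes f :: "'a \<Rightarrow> real"
  assumes f: "integrable L f" and nonneg: "\<And>x. 0 \<le> f x"
  shows "integrable P (\<lambda>\<omega>. \<Sum>x\<in>#\<Phi> \<omega>. f x) \<and> (\<integral>\<omega>. (\<Sum>x\<in>#\<Phi> \<omega>. f x) \<partial>P) = integral\<^sup>L L f"
proof -
  have sum_nonneg: "0 \<le> (\<Sum>x\<in>#\<phi>. f x)" for \<phi>
    using nonneg by (simp add: sum_mset_image_nonneg)
  have ennreal_sum: "ennreal (\<Sum>x\<in>#\<phi>. f x) = (\<Sum>x\<in>#\<phi>. ennreal (f x))" for \<phi>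
    using nonneg by (simp add: ennreal_sum_mset_image)
  have "(\<lambda>x. ennreal (f x)) \<in> borel_measurable L"
    using f by simp
  note campbell = campbell_nn_integral[OF this, folded ennreal_sum]
  then have "(\<lambda>\<omega>. enn2real (ennreal (\<Sum>x\<in>#\<Phi> \<omega>. f x))) \<in> borel_measurable P"
    by (intro borel_measurable_enn2real) simp
  then have meas: "(\<lambda>\<omega>. \<Sum>x\<in>#\<Phi> \<omega>. f x) \<in> borel_measurable P"
    using sum_nonneg by simp
  have nn: "(\<integral>\<^sup>+\<omega>. ennreal (\<Sum>x\<in>#\<Phi> \<omega>. f x) \<partial>P) = ennreal (integral\<^sup>L L f)"
    using campbell nn_integral_eq_integral[OF f] nonneg by simp
  have "integrable P (\<lambda>\<omega>. \<Sum>x\<in>#\<Phi> \<omega>. f x)"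
    by (rule integrableI_nonneg[OF meas]) (use sum_nonneg nn in auto)
  moreover have "0 \<le> integral\<^sup>L L f"
    using nonneg by simp
  ultimately show ?thesis
    using integral_eq_nn_integral[OF meas] sum_nonneg nn by simp
qed

lemma campbell_integral:
  fixes f :: "'a \<Rightarrow> real"
  assumes f: "integrable L f"
  shows "(\<integral>\<omega>. (\<Sum>x\<in>#\<Phi> \<omega>. f x) \<partial>P) = integral\<^sup>L L f"
proof -
  define f\<^sub>p where "f\<^sub>p x = max 0 (f x)" for x
  define f\<^sub>n where "f\<^sub>n x = max 0 (- f x)" for x
  have f_split: "f = (\<lambda>x. f\<^sub>p x - f\<^sub>n x)"
    unfolding f\<^sub>p_def f\<^sub>n_def by auto
  have "integrable L f\<^sub>p" "integrable L f\<^sub>n"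
    unfolding f\<^sub>p_def f\<^sub>n_def using f by auto
  moreover have "0 \<le> f\<^sub>p x" "0 \<le> f\<^sub>n x" for x
    unfolding f\<^sub>p_def f\<^sub>n_def by auto
  ultimately show ?thesis
    by (simp add: f_split sum_mset_image_diff campbell_integral_nonneg Bochner_Integration.integral_diff)
qed

end

lemma scale_measure_eq_density:
  "0 \<le> c \<Longrightarrow> scale_measure (ennreal c) M = density M (\<lambda>_. ennreal c)"
  by (rule measure_eqI) (simp_all add: emeasure_density nn_integral_cmult_indicator)

lemma
  fixes f :: "'a \<Rightarrow> real"
  assumes "0 < c" and "f \<in> borel_measurable M"
  shows integrable_scale_measure_iff: "integrable (scale_measure (ennreal c) M) f \<longleftrightarrow> integrable M f"
    and integral_scale_measure: "integral\<^sup>L (scale_measure (ennreal c) M) f = c * integral\<^sup>L M f"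
  using assms integrable_density[OF assms(2), of "\<lambda>_. c"] integral_density[OF assms(2), of "\<lambda>_. c"]
  by (simp_all add: scale_measure_eq_density)

lemma
  fixes f :: "'a \<Rightarrow> real"
  assumes "0 < emeasure M (space M)" "emeasure M (space M) < \<infinity>"
    and "integrable (normalize_measure M) f"
  shows integrable_of_normalize_measure: "integrable M f"
    and integral_normalize_measure: "integral\<^sup>L M f = measure M (space M) * integral\<^sup>L (normalize_measure M) f"
proof -
  have "0 < measure M (space M)"
    using assms(1,2) by (simp add: measure_def enn2real_positive_iff)
  moreover have "f \<in> borel_measurable M"
    using assms(3) by (simp add: normalize_measure_def)
  ultimately show "integrable M f" "integral\<^sup>L M f = measure M (space M) * integral\<^sup>L (normalize_measure M) f"
    using assms(3) by (simp_all add: normalize_measure_def integrable_scale_measure_iff integral_scale_measure)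
qed

theorem proposition3p7:
  fixes X :: "'a::euclidean_space set"
    and Mf :: "'a measure set"
    and S' :: "'a measure \<Rightarrow> 'a \<Rightarrow> real"
    and P :: "'b measure"
    and \<Phi> :: "'b \<Rightarrow> 'a multiset"
    and \<Lambda> Q :: "'a measure"
  assumes "bounded X"
    and "Mf \<subseteq> finite_nonzero_measures_on X"
    and "consistent_id (normalize_measure ` Mf) S'"
    and "finite_point_process P X \<Phi>"
    and "\<Lambda> \<in> Mf"
    and "is_intensity_measure P \<Phi> \<Lambda>"
    and "Q \<in> Mf"
    and "integrable P (\<lambda>\<omega>. sum_score S' (normalize_measure Q) (\<Phi> \<omega>))"
    and "integrable P (\<lambda>\<omega>. sum_score S' (normalize_measure \<Lambda>) (\<Phi> \<omega>))"
  shows "(\<integral>\<omega>. sum_score S' (normalize_measure Q) (\<Phi> \<omega>) \<partial>P)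
           \<ge> (\<integral>\<omega>. sum_score S' (normalize_measure \<Lambda>) (\<Phi> \<omega>) \<partial>P)
         \<and> (strictly_consistent_id (normalize_measure ` Mf) S' \<longrightarrow>
              (\<integral>\<omega>. sum_score S' (normalize_measure Q) (\<Phi> \<omega>) \<partial>P)
                = (\<integral>\<omega>. sum_score S' (normalize_measure \<Lambda>) (\<Phi> \<omega>) \<partial>P) \<longrightarrow>
              normalize_measure Q = normalize_measure \<Lambda>)"
proof -
  interpret point_process_intensity P X \<Phi> \<Lambda>
    using assms(2,4,5,6) by unfold_locales (auto simp: finite_nonzero_measures_on_def)
  define Fs where "Fs = normalize_measure ` Mf"
  define Qn \<Lambda>n where "Qn = normalize_measure Q" and "\<Lambda>n = normalize_measure \<Lambda>"
  have Qn: "Qn \<in> Fs" and \<Lambda>n: "\<Lambda>n \<in> Fs"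
    using assms(5,7) by (auto simp: Fs_def Qn_def \<Lambda>n_def)
  have mass: "0 < emeasure \<Lambda> (space \<Lambda>)" "emeasure \<Lambda> (space \<Lambda>) < \<infinity>"
    using assms(2,5) by (auto simp: finite_nonzero_measures_on_def space_L zero_less_iff_neq_zero)
  then have "0 < measure \<Lambda> (space \<Lambda>)"
    by (simp add: measure_def enn2real_positive_iff)
  moreover have
    "(\<integral>\<omega>. sum_score S' G (\<Phi> \<omega>) \<partial>P) = measure \<Lambda> (space \<Lambda>) * (\<integral>x. S' G x \<partial>\<Lambda>n)"
    if "G \<in> Fs" for G
  proof -
    have "integrable \<Lambda>n (S' G)"
      using assms(3) that \<Lambda>n unfolding consistent_id_def Fs_def by blast
    then show ?thesis
      using mass unfolding sum_score_def \<Lambda>n_def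
      by (simp add: campbell_integral integrable_of_normalize_measure integral_normalize_measure)
  qed
  moreover have "(\<integral>x. S' Qn x \<partial>\<Lambda>n) \<ge> (\<integral>x. S' \<Lambda>n x \<partial>\<Lambda>n)"
    using assms(3) Qn \<Lambda>n unfolding consistent_id_def Fs_def by blast
  moreover have "Qn = \<Lambda>n"
    if "strictly_consistent_id Fs S'" and "(\<integral>x. S' Qn x \<partial>\<Lambda>n) = (\<integral>x. S' \<Lambda>n x \<partial>\<Lambda>n)"
    using that Qn \<Lambda>n by (simp add: strictly_consistent_id_def)
  ultimately show ?thesis
    using Qn \<Lambda>n unfolding Fs_def Qn_def \<Lambda>n_def by simp
qed

end
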